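(* Let $n\ge3$ and $2\le j\le n-1$. A permutation $\sigma\in\mathfrak S_n$ is minimal in the right weak order within its $\equiv^{(j)}$-class if and only if $\sigma$ admits a reduced word accepted by the automaton $\mathcal U(j)$.
   Context: Simple transpositions $s_i=(i,i+1)$, $1\le i\le n-1$. A word $s_{i_1}\cdots s_{i_k}$ represents the permutation obtained from the identity word $12\cdots n$ by successively swapping the letters in positions $i_1$, then $i_2$, \dots, then $i_k$; it is reduced if $k$ is minimal (equal to the number of inversions). Right weak order: $\sigma\le\tau$ iff value-inversions of $\sigma$ are contained in those of $\tau$. The congruence $\equiv^{(j)}$ on $\mathfrak S_n$ (permutations as words) is the equivalence relation generated by $U\,j\,V\,ac\,W\equiv U\,j\,V\,ca\,W$ for all $a<j<c$ with $a,c$ adjacent letters and $U,V,W$ words (equivalently, the permutree congruence for the decoration with $\delta_j=\text{up}$ and all other letters none). The automaton $\mathcal U(j)$ over the alphabet $\{s_1,\dots,s_{n-1}\}$ has states $h_k,i_k$ for $j-1\le k\le n-1$ and $d_k$ for $j-1\le k\le n-2$; initial state $h_{j-1}$; accepting states all $h_k$ and $i_k$; rejecting states all $d_k$. Transitions: for $j-1\le k\le n-2$, $h_k\xrightarrow{s_k}i_k$, $h_k\xrightarrow{s_{k+1}}h_{k+1}$, $i_k\xrightarrow{s_{k+1}}d_k$; and $h_{n-1}\xrightarrow{s_{n-1}}i_{n-1}$. Every letter not listed at a state leaves the state unchanged (so each $d_k$ is a rejecting sink). *)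

theory Defs
  imports Main
begin

definition perms :: "nat \<Rightarrow> nat list set" where
  "perms n = {xs. distinct xs \<and> set xs = {1..n}}"

text \<open>Swap the letters in positions i and i+1 (positions are 1-indexed).\<close>
definition swap_pos :: "nat \<Rightarrow> nat list \<Rightarrow> nat list" where
  "swap_pos i xs = xs[i - 1 := xs ! i, i := xs ! (i - 1)]"

text \<open>The permutation represented by the word s_{i_1} ... s_{i_k}
  (a word is the list [i_1,...,i_k]): starting from the identity 12...n,
  swap positions i_1, then i_2, ..., then i_k.\<close>
definition word_perm :: "nat \<Rightarrow> nat list \<Rightarrow> nat list" where
  "word_perm n w = fold swap_pos w [1..<n+1]"

definition is_word :: "nat \<Rightarrow> nat list \<Rightarrow> bool" where
  "is_word n w \<longleftrightarrow> (\<forall>i\<in>set w. 1 \<le> i \<and> i \<le> n - 1)"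

definition inversions :: "nat list \<Rightarrow> (nat \<times> nat) set" where
  "inversions xs = {(a, b). \<exists>p q. p < q \<and> q < length xs \<and> xs ! p = b \<and> xs ! q = a \<and> a < b}"

definition reduced_word :: "nat \<Rightarrow> nat list \<Rightarrow> bool" where
  "reduced_word n w \<longleftrightarrow> length w = card (inversions (word_perm n w))"

definition weak_le :: "nat list \<Rightarrow> nat list \<Rightarrow> bool" where
  "weak_le \<sigma> \<tau> \<longleftrightarrow> inversions \<sigma> \<subseteq> inversions \<tau>"

definition cong_step :: "nat \<Rightarrow> nat list \<Rightarrow> nat list \<Rightarrow> bool" where
  "cong_step j \<sigma> \<tau> \<longleftrightarrow> (\<exists>U V W a c. a < j \<and> j < c \<and>
      \<sigma> = U @ [j] @ V @ [a, c] @ W \<and> \<tau> = U @ [j] @ V @ [c, a] @ W)"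

definition congj :: "nat \<Rightarrow> nat list \<Rightarrow> nat list \<Rightarrow> bool" where
  "congj j = (\<lambda>\<sigma> \<tau>. cong_step j \<sigma> \<tau> \<or> cong_step j \<tau> \<sigma>)\<^sup>*\<^sup>*"

definition weak_minimal_in_class :: "nat \<Rightarrow> nat list \<Rightarrow> bool" where
  "weak_minimal_in_class j \<sigma> \<longleftrightarrow>
     \<not> (\<exists>\<tau>. congj j \<sigma> \<tau> \<and> weak_le \<tau> \<sigma> \<and> \<tau> \<noteq> \<sigma>)"

datatype ustate = H nat | I nat | D nat

fun u_delta :: "nat \<Rightarrow> ustate \<Rightarrow> nat \<Rightarrow> ustate" where
  "u_delta n (H k) i =
     (if k + 2 \<le> n \<and> i = k then I k
      else if k + 2 \<le> n \<and> i = k + 1 then H (k + 1)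
      else if k = n - 1 \<and> i = n - 1 then I k
      else H k)"
| "u_delta n (I k) i = (if k + 2 \<le> n \<and> i = k + 1 then D k else I k)"
| "u_delta n (D k) i = D k"

fun u_accepting :: "ustate \<Rightarrow> bool" where
  "u_accepting (H k) = True"
| "u_accepting (I k) = True"
| "u_accepting (D k) = False"

definition U_accepts :: "nat \<Rightarrow> nat \<Rightarrow> nat list \<Rightarrow> bool" where
  "U_accepts n j w \<longleftrightarrow> u_accepting (fold (\<lambda>i q. u_delta n q i) w (H (j - 1)))"

end

theory Submission
  imports Defs
begin

text \<open>
  Because of the shape of the generating step, \<open>\<sigma>\<close> is minimal in its class iff it avoids the
  pattern \<open>j \<dots> c a\<close> (\<open>c a\<close> adjacent, \<open>a < j < c\<close>), i.e. iff \<open>\<sigma> = U j L G\<close> with all letters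
  of \<open>L\<close> below \<open>j\<close> and all letters of \<open>G\<close> above \<open>j\<close>; the congruence fixes \<open>U\<close> and the
  relative orders of the small and of the large letters after \<open>j\<close>, so nothing below such a
  \<open>\<sigma>\<close> in the weak order is congruent to it.

  Reduced words are the chains of ascent swaps starting at the identity. Along such a chain the
  automaton tracks the letter \<open>j\<close>: in \<open>h\<^sub>k\<close> it sits at position \<open>k\<close> with only larger letters
  to its right; \<open>s\<^sub>k\<close> moves a smaller letter over it and leads to \<open>i\<^sub>k\<close>, after which only
  smaller letters lie between \<open>j\<close> and position \<open>k\<close> and only larger ones beyond, until
  \<open>s\<^sub>k\<^sub>+\<^sub>1\<close> would create the forbidden pattern. Conversely, for \<open>\<sigma> = U j L G\<close> one reaches
  \<open>U L j G\<close> inside the \<open>h\<close>-states, swaps \<open>j\<close> with the last letter of \<open>L\<close>, and finishes with a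
  chain that never swaps across the boundary between \<open>U j L\<close> and \<open>G\<close>.
\<close>

section \<open>Inversions and adjacent transpositions\<close>

definition occurs_before :: "'a list \<Rightarrow> 'a \<Rightarrow> 'a \<Rightarrow> bool" where
  "occurs_before xs u v \<longleftrightarrow> (\<exists>p q. p < q \<and> q < length xs \<and> xs ! p = u \<and> xs ! q = v)"

lemma inversions_eq: "inversions xs = {(a, b). a < b \<and> occurs_before xs b a}"
  unfolding inversions_def occurs_before_def by auto

lemma occurs_before_Nil [simp]: "\<not> occurs_before [] u v"
  unfolding occurs_before_def by auto

lemma occurs_before_Cons:
  "occurs_before (x # xs) u v \<longleftrightarrow> (u = x \<and> v \<in> set xs) \<or> occurs_before xs u v"
proof
  assume "occurs_before (x # xs) u v"
  then obtain p q where pq: "p < q" "q < Suc (length xs)" "(x # xs) ! p = u" "(x # xs) ! q = v"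
    unfolding occurs_before_def by auto
  then obtain q' where q: "q = Suc q'" by (cases q) auto
  show "(u = x \<and> v \<in> set xs) \<or> occurs_before xs u v"
  proof (cases p)
    case 0
    then show ?thesis using pq q by auto
  next
    case (Suc p')
    then show ?thesis using pq q unfolding occurs_before_def by auto
  qed
next
  assume "(u = x \<and> v \<in> set xs) \<or> occurs_before xs u v"
  then show "occurs_before (x # xs) u v"
  proof
    assume "u = x \<and> v \<in> set xs"
    then obtain q where "q < length xs" "xs ! q = v" "u = x" by (auto simp: in_set_conv_nth)
    then show ?thesis
      unfolding occurs_before_def by (intro exI[of _ 0] exI[of _ "Suc q"]) auto
  next
    assume "occurs_before xs u v"
    then show ?thesis
      unfolding occurs_before_def by (metis Suc_less_eq length_Cons nth_Cons_Suc)
  qed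
qed

lemma occurs_before_append:
  "occurs_before (A @ B) u v \<longleftrightarrow>
     occurs_before A u v \<or> occurs_before B u v \<or> (u \<in> set A \<and> v \<in> set B)"
  by (induction A) (auto simp: occurs_before_Cons)

lemma occurs_before_in_set: "occurs_before xs u v \<Longrightarrow> u \<in> set xs \<and> v \<in> set xs"
  unfolding occurs_before_def by auto

lemma occurs_before_nth: "p < q \<Longrightarrow> q < length xs \<Longrightarrow> occurs_before xs (xs ! p) (xs ! q)"
  unfolding occurs_before_def by blast

lemma finite_inversions: "finite (inversions xs)"
proof (rule finite_subset)
  show "inversions xs \<subseteq> set xs \<times> set xs"
    unfolding inversions_eq by (auto dest: occurs_before_in_set)
qed simp

lemma inversions_upt: "inversions [m..<n] = {}"
  unfolding inversions_def by auto

lemma inversions_swap_ascent: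
  assumes "distinct (A @ [a, b] @ B)" "a < b"
  shows "inversions (A @ [b, a] @ B) = insert (a, b) (inversions (A @ [a, b] @ B))"
    and "(a, b) \<notin> inversions (A @ [a, b] @ B)"
  using assms
  by (auto simp: inversions_eq occurs_before_append occurs_before_Cons dest: occurs_before_in_set)

lemma swap_pos_append:
  assumes "length A = i - 1" "1 \<le> i"
  shows "swap_pos i (A @ [a, b] @ B) = A @ [b, a] @ B"
  using assms unfolding swap_pos_def by (auto simp: list_update_append nth_append)

lemma obtain_swapped_pair:
  assumes "1 \<le> i" "i < length xs"
  obtains A a b B where "xs = A @ [a, b] @ B" and "swap_pos i xs = A @ [b, a] @ B"
    and "length A = i - 1" and "xs ! (i - 1) = a" and "xs ! i = b"
proof
  have "xs = take (i - 1) xs @ drop (i - 1) xs" by simp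
  also have "drop (i - 1) xs = [xs ! (i - 1), xs ! i] @ drop (i + 1) xs"
    using assms Cons_nth_drop_Suc[of "i - 1" xs] Cons_nth_drop_Suc[of i xs] by simp
  finally show xs: "xs = take (i - 1) xs @ [xs ! (i - 1), xs ! i] @ drop (i + 1) xs" .
  show "length (take (i - 1) xs) = i - 1" using assms by simp
  then show "swap_pos i xs = take (i - 1) xs @ [xs ! i, xs ! (i - 1)] @ drop (i + 1) xs"
    using swap_pos_append assms(1) xs by metis
qed simp_all

lemma length_swap_pos [simp]: "length (swap_pos i xs) = length xs"
  unfolding swap_pos_def by simp

lemma set_swap_pos: "1 \<le> i \<Longrightarrow> i < length xs \<Longrightarrow> set (swap_pos i xs) = set xs"
  by (elim obtain_swapped_pair) auto

lemma distinct_swap_pos: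
  "1 \<le> i \<Longrightarrow> i < length xs \<Longrightarrow> distinct (swap_pos i xs) \<longleftrightarrow> distinct xs"
  by (elim obtain_swapped_pair) auto

lemma nth_swap_pos:
  assumes "1 \<le> i" "i < length xs"
  shows "swap_pos i xs ! p =
    (if p = i - 1 then xs ! i else if p = i then xs ! (i - 1) else xs ! p)"
  using assms unfolding swap_pos_def by (auto simp: nth_list_update)

lemma swap_pos_swap_pos: "1 \<le> i \<Longrightarrow> i < length xs \<Longrightarrow> swap_pos i (swap_pos i xs) = xs"
  by (rule nth_equalityI) (auto simp: nth_swap_pos)

lemma inversions_swap_pos_ascent:
  assumes "1 \<le> i" "i < length xs" "distinct xs" "xs ! (i - 1) < xs ! i"
  shows "inversions (swap_pos i xs) = insert (xs ! (i - 1), xs ! i) (inversions xs)"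
    and "(xs ! (i - 1), xs ! i) \<notin> inversions xs"
proof -
  obtain A a b B where xs: "xs = A @ [a, b] @ B" and swap: "swap_pos i xs = A @ [b, a] @ B"
    and a: "xs ! (i - 1) = a" and b: "xs ! i = b"
    using obtain_swapped_pair[OF assms(1,2)] .
  have "distinct (A @ [a, b] @ B)" using assms(3) unfolding xs .
  moreover have "a < b" using assms(4) unfolding a b .
  ultimately have "inversions (A @ [b, a] @ B) = insert (a, b) (inversions (A @ [a, b] @ B))"
    and "(a, b) \<notin> inversions (A @ [a, b] @ B)"
    by (rule inversions_swap_ascent)+
  then show "inversions (swap_pos i xs) = insert (xs ! (i - 1), xs ! i) (inversions xs)"
    and "(xs ! (i - 1), xs ! i) \<notin> inversions xs"
    unfolding swap a b using xs by simp_all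
qed

lemma card_inversions_swap_pos_ascent:
  assumes "1 \<le> i" "i < length xs" "distinct xs" "xs ! (i - 1) < xs ! i"
  shows "card (inversions (swap_pos i xs)) = card (inversions xs) + 1"
  using inversions_swap_pos_ascent[OF assms] finite_inversions by simp

lemma card_inversions_swap_pos_descent:
  assumes "1 \<le> i" "i < length xs" "distinct xs" "xs ! i < xs ! (i - 1)"
  shows "card (inversions (swap_pos i xs)) + 1 = card (inversions xs)"
  using card_inversions_swap_pos_ascent[of i "swap_pos i xs"] assms
  by (simp add: nth_swap_pos distinct_swap_pos swap_pos_swap_pos)

section \<open>Reduced words as chains of ascent swaps\<close>

fun ascent_chain :: "nat list \<Rightarrow> nat list \<Rightarrow> bool" where
  "ascent_chain xs [] = True"
| "ascent_chain xs (i # w) \<longleftrightarrow>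
     1 \<le> i \<and> i < length xs \<and> xs ! (i - 1) < xs ! i \<and> ascent_chain (swap_pos i xs) w"

lemma ascent_chain_append:
  "ascent_chain xs (u @ v) \<longleftrightarrow> ascent_chain xs u \<and> ascent_chain (fold swap_pos u xs) v"
  by (induction u arbitrary: xs) auto

lemma ascent_chain_letters:
  "ascent_chain xs w \<Longrightarrow> \<forall>i\<in>set w. 1 \<le> i \<and> i < length xs"
  by (induction w arbitrary: xs) fastforce+

lemma ascent_chain_inversions:
  assumes "ascent_chain xs w" "distinct xs"
  shows "card (inversions (fold swap_pos w xs)) = card (inversions xs) + length w"
    and "inversions xs \<subseteq> inversions (fold swap_pos w xs)"
  using assms
proof (induction w arbitrary: xs)
  case (Cons i w)
  { case 1
    then show ?case
      using Cons.IH(1)[of "swap_pos i xs"] card_inversions_swap_pos_ascent[of i xs]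
      by (simp add: distinct_swap_pos)
  next
    case 2
    then show ?case
      using Cons.IH(2)[of "swap_pos i xs"] inversions_swap_pos_ascent(1)[of i xs]
      by (auto simp: distinct_swap_pos)
  }
qed simp_all

lemma card_inversions_swap_pos_le:
  assumes "1 \<le> i" "i < length xs" "distinct xs"
  shows "card (inversions (swap_pos i xs)) \<le> card (inversions xs) + 1"
proof -
  have "xs ! (i - 1) \<noteq> xs ! i" using assms by (simp add: nth_eq_iff_index_eq)
  then consider "xs ! (i - 1) < xs ! i" | "xs ! i < xs ! (i - 1)" by linarith
  then show ?thesis
    by cases (use card_inversions_swap_pos_ascent[OF assms] card_inversions_swap_pos_descent[OF assms]
        in fastforce)+
qed

lemma card_inversions_fold_swap_pos_le:
  "distinct xs \<Longrightarrow> \<forall>i\<in>set w. 1 \<le> i \<and> i < length xs \<Longrightarrow>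
     card (inversions (fold swap_pos w xs)) \<le> card (inversions xs) + length w"
proof (induction w arbitrary: xs)
  case (Cons i w)
  then have "card (inversions (fold swap_pos w (swap_pos i xs)))
      \<le> card (inversions (swap_pos i xs)) + length w"
    by (simp add: distinct_swap_pos)
  also have "\<dots> \<le> card (inversions xs) + 1 + length w"
    using Cons.prems card_inversions_swap_pos_le by simp
  finally show ?case by simp
qed simp

lemma ascent_chain_if_card_inversions:
  "distinct xs \<Longrightarrow> \<forall>i\<in>set w. 1 \<le> i \<and> i < length xs \<Longrightarrow>
     card (inversions (fold swap_pos w xs)) = card (inversions xs) + length w \<Longrightarrow>
     ascent_chain xs w"
proof (induction w arbitrary: xs)
  case (Cons i w)
  then have i: "1 \<le> i" "i < length xs" and d: "distinct (swap_pos i xs)"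
    by (auto simp: distinct_swap_pos)
  have "card (inversions (fold swap_pos w (swap_pos i xs)))
      \<le> card (inversions (swap_pos i xs)) + length w"
    using Cons.prems d by (intro card_inversions_fold_swap_pos_le) auto
  then have card: "card (inversions (swap_pos i xs)) = card (inversions xs) + 1"
    using Cons.prems(3) card_inversions_swap_pos_le[OF i Cons.prems(1)] by simp
  then have "\<not> xs ! i < xs ! (i - 1)"
    using card_inversions_swap_pos_descent[OF i Cons.prems(1)] by linarith
  moreover have "xs ! (i - 1) \<noteq> xs ! i" using Cons.prems(1) i by (simp add: nth_eq_iff_index_eq)
  moreover have "ascent_chain (swap_pos i xs) w"
    using Cons.IH[OF d] Cons.prems card by simp
  ultimately show ?case using i by simp
qed simp

lemma reduced_word_iff_ascent_chain:
  "is_word n w \<and> reduced_word n w \<longleftrightarrow> ascent_chain [1..<n+1] w"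
proof
  assume w: "is_word n w \<and> reduced_word n w"
  show "ascent_chain [1..<n+1] w"
  proof (rule ascent_chain_if_card_inversions)
    show "\<forall>i\<in>set w. 1 \<le> i \<and> i < length [1..<n+1]"
      using w unfolding is_word_def by fastforce
    show "card (inversions (fold swap_pos w [1..<n+1])) = card (inversions [1..<n+1]) + length w"
      using w unfolding reduced_word_def word_perm_def by (simp add: inversions_upt del: upt_Suc)
  qed simp
next
  assume chain: "ascent_chain [1..<n+1] w"
  have "card (inversions (fold swap_pos w [1..<n+1])) = length w"
    using ascent_chain_inversions(1)[OF chain] by (simp add: inversions_upt del: upt_Suc)
  moreover have "\<forall>i\<in>set w. 1 \<le> i \<and> i \<le> n - 1"
    using ascent_chain_letters[OF chain] by (auto simp del: upt_Suc)
  ultimately show "is_word n w \<and> reduced_word n w"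
    unfolding is_word_def reduced_word_def word_perm_def by simp
qed

section \<open>Ascent chains in the weak order\<close>

lemma exists_ascent_inverted:
  assumes "distinct xs" "distinct ys" "set xs = set ys" "xs \<noteq> ys"
    and "inversions xs \<subseteq> inversions ys"
  shows "\<exists>i. 1 \<le> i \<and> i < length xs \<and> xs ! (i - 1) < xs ! i
           \<and> (xs ! (i - 1), xs ! i) \<in> inversions ys"
  using assms
proof (induction xs arbitrary: ys)
  case Nil
  then show ?case by simp
next
  case (Cons x xs)
  obtain y ys' where ys: "ys = y # ys'" using Cons.prems(3) by (cases ys) auto
  show ?case
  proof (cases "y = x")
    case True
    have "inversions xs \<subseteq> inversions ys'"
    proof
      fix p assume "p \<in> inversions xs"
      moreover have "x \<notin> set xs" using Cons.prems(1) by simp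
      ultimately show "p \<in> inversions ys'"
        using Cons.prems(5) ys True
        by (auto simp: inversions_eq occurs_before_Cons dest: occurs_before_in_set)
    qed
    then obtain i where i: "1 \<le> i" "i < length xs" "xs ! (i - 1) < xs ! i"
      "(xs ! (i - 1), xs ! i) \<in> inversions ys'"
      using Cons.IH[of ys'] Cons.prems ys True by (auto simp: insert_ident)
    have "(xs ! (i - 1), xs ! i) \<in> inversions ys"
      using i(4) ys by (auto simp: inversions_eq occurs_before_Cons)
    then show ?thesis using i by (intro exI[of _ "Suc i"]) (simp add: nth_Cons')
  next
    case False
    \<comment> \<open>for the left neighbour \<open>z\<close> of \<open>y\<close> in \<open>x # xs\<close>, \<open>y < z\<close> would put \<open>z\<close> before the first
      letter \<open>y\<close> of \<open>ys\<close>; so \<open>z y\<close> is an ascent, and it is inverted in \<open>ys\<close>\<close>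
    obtain q where q: "q < length (x # xs)" "(x # xs) ! q = y"
      using Cons.prems(3) ys by (metis in_set_conv_nth list.set_intros(1))
    have "q \<ge> 1" using q False by (cases q) auto
    define z where "z = (x # xs) ! (q - 1)"
    have "z \<noteq> y"
      using nth_eq_iff_index_eq[OF Cons.prems(1), of "q - 1" q] q \<open>q \<ge> 1\<close> unfolding z_def by force
    moreover have "z \<in> set (x # xs)" using q unfolding z_def by (metis less_imp_diff_less nth_mem)
    ultimately have z_later: "z \<in> set ys'" using Cons.prems(3) ys by auto
    show ?thesis
    proof (cases "z < y")
      case True
      then have "(z, y) \<in> inversions ys"
        using z_later ys by (simp add: inversions_eq occurs_before_Cons)
      then show ?thesis using q \<open>q \<ge> 1\<close> True unfolding z_def by (intro exI[of _ q]) simp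
    next
      case False
      then have "y < z" using \<open>z \<noteq> y\<close> by simp
      moreover have "occurs_before (x # xs) z y"
        using occurs_before_nth[of "q - 1" q "x # xs"] q \<open>q \<ge> 1\<close> unfolding z_def by simp
      ultimately have "occurs_before (y # ys') z y"
        using Cons.prems(5) ys by (auto simp: inversions_eq)
      then have "y \<in> set ys'"
        using \<open>z \<noteq> y\<close> by (auto simp: occurs_before_Cons dest: occurs_before_in_set)
      then show ?thesis using Cons.prems(2) ys by simp
    qed
  qed
qed

lemma set_take_swap_pos:
  assumes "1 \<le> i" "i < length xs" "c \<noteq> i"
  shows "set (take c (swap_pos i xs)) = set (take c xs)"
proof -
  obtain A a b B where xs: "xs = A @ [a, b] @ B" and swap: "swap_pos i xs = A @ [b, a] @ B"
    and A: "length A = i - 1"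
    using obtain_swapped_pair[OF assms(1,2)] .
  show ?thesis
  proof (cases "c < i")
    case True
    then show ?thesis unfolding swap using A by (simp add: xs)
  next
    case False
    then have "c - length A = Suc (Suc (c - i - 1))" using A assms by simp
    then show ?thesis unfolding swap using A by (simp add: xs insert_commute)
  qed
qed

lemma not_inverted_at_equal_prefix_sets:
  assumes "distinct xs" "distinct ys" "1 \<le> c" "c < length xs"
    and "set (take c xs) = set (take c ys)"
  shows "(xs ! (c - 1), xs ! c) \<notin> inversions ys"
proof
  have disjoint: "set (take c zs) \<inter> set (drop c zs) = {}" if "distinct zs" for zs :: "nat list"
    using set_take_disj_set_drop_if_distinct[OF that, of c c] by simp
  have "xs ! (c - 1) \<in> set (take c xs)"
    using nth_mem[of "c - 1" "take c xs"] assms(3,4) by simp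
  then have early: "xs ! (c - 1) \<in> set (take c ys)" using assms(5) by simp
  have "xs ! c \<in> set (drop c xs)"
    using nth_mem[of 0 "drop c xs"] assms(4) by simp
  then have late: "xs ! c \<notin> set (take c ys)" using disjoint[OF assms(1)] assms(5) by blast
  assume "(xs ! (c - 1), xs ! c) \<in> inversions ys"
  then have "occurs_before (take c ys @ drop c ys) (xs ! c) (xs ! (c - 1))"
    by (simp add: inversions_eq)
  then have "occurs_before (drop c ys) (xs ! c) (xs ! (c - 1))"
    using late unfolding occurs_before_append by (blast dest: occurs_before_in_set)
  then have "xs ! (c - 1) \<in> set (drop c ys)" by (blast dest: occurs_before_in_set)
  then show False using early disjoint[OF assms(2)] by blast
qed

lemma ascent_chain_to_weak_greater:
  assumes "distinct xs" "distinct ys" "set xs = set ys" "inversions xs \<subseteq> inversions ys"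
  shows "\<exists>w. ascent_chain xs w \<and> fold swap_pos w xs = ys \<and>
             (\<forall>c. set (take c xs) = set (take c ys) \<longrightarrow> c \<notin> set w)"
  using assms
proof (induction "card (inversions ys) - card (inversions xs)" arbitrary: xs rule: less_induct)
  case less
  show ?case
  proof (cases "xs = ys")
    case True
    then show ?thesis by (intro exI[of _ "[]"]) simp
  next
    case False
    then obtain i where i: "1 \<le> i" "i < length xs" "xs ! (i - 1) < xs ! i"
      and inverted: "(xs ! (i - 1), xs ! i) \<in> inversions ys"
      using exists_ascent_inverted less.prems by blast
    let ?xs' = "swap_pos i xs"
    have inv': "inversions ?xs' = insert (xs ! (i - 1), xs ! i) (inversions xs)"
      and card': "card (inversions ?xs') = card (inversions xs) + 1"
      using inversions_swap_pos_ascent card_inversions_swap_pos_ascent i less.prems(1) by blast+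
    have "distinct ?xs'" "set ?xs' = set ys" "inversions ?xs' \<subseteq> inversions ys"
      using i less.prems inverted inv' by (simp_all add: distinct_swap_pos set_swap_pos)
    moreover have "card (inversions ys) - card (inversions ?xs')
        < card (inversions ys) - card (inversions xs)"
      using card' card_mono[OF finite_inversions \<open>inversions ?xs' \<subseteq> inversions ys\<close>] by simp
    ultimately obtain w where w: "ascent_chain ?xs' w" "fold swap_pos w ?xs' = ys"
      "\<forall>c. set (take c ?xs') = set (take c ys) \<longrightarrow> c \<notin> set w"
      using less.hyps less.prems(2) by blast
    have "c \<notin> set (i # w)" if c: "set (take c xs) = set (take c ys)" for c
    proof -
      have "c \<noteq> i" using not_inverted_at_equal_prefix_sets less.prems(1,2) i inverted c by blast
      then show ?thesis using w(3) set_take_swap_pos[OF i(1,2)] c by simp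
    qed
    then show ?thesis using w i by (intro exI[of _ "i # w"]) simp
  qed
qed

section \<open>Minimal elements of the classes\<close>

definition avoids_j_ca :: "nat \<Rightarrow> nat list \<Rightarrow> bool" where
  "avoids_j_ca j \<sigma> \<longleftrightarrow> (\<forall>U V W c a. \<sigma> = U @ [j] @ V @ [c, a] @ W \<longrightarrow> \<not> (a < j \<and> j < c))"

lemma small_letters_first:
  fixes j :: "'a :: linorder"
  assumes "\<forall>V W c a. S = V @ [c, a] @ W \<longrightarrow> \<not> (a < j \<and> j < c)" "j \<notin> set S"
  shows "S = filter (\<lambda>x. x < j) S @ filter (\<lambda>x. j < x) S"
  using assms
proof (induction S)
  case (Cons x S)
  have "\<forall>V W c a. S = V @ [c, a] @ W \<longrightarrow> \<not> (a < j \<and> j < c)"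
    using Cons.prems(1) by (metis append_Cons)
  then have IH: "S = filter (\<lambda>x. x < j) S @ filter (\<lambda>x. j < x) S"
    using Cons.IH Cons.prems(2) by simp
  show ?case
  proof (cases "x < j")
    case False
    then have "j < x" using Cons.prems(2) by auto
    have "filter (\<lambda>x. x < j) S = []"
    proof (rule ccontr)
      assume "filter (\<lambda>x. x < j) S \<noteq> []"
      then obtain a L where L: "filter (\<lambda>x. x < j) S = a # L" by (cases "filter (\<lambda>x. x < j) S") auto
      then have "a < j" by (metis filter_eq_ConsD)
      have "x # S = [] @ [x, a] @ (L @ filter (\<lambda>x. j < x) S)" using IH L by simp
      then show False using Cons.prems(1) \<open>a < j\<close> \<open>j < x\<close> by blast
    qed
    then show ?thesis using IH \<open>j < x\<close> by simp
  qed (use IH in simp)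
qed simp

text \<open>Everything a generating step of the congruence leaves unchanged.\<close>

definition j_profile :: "nat \<Rightarrow> nat list \<Rightarrow> nat list \<times> nat list \<times> nat list" where
  "j_profile j \<sigma> = (let S = dropWhile (\<lambda>x. x \<noteq> j) \<sigma> in
     (takeWhile (\<lambda>x. x \<noteq> j) \<sigma>, filter (\<lambda>x. x < j) S, filter (\<lambda>x. j < x) S))"

lemma j_profile_split:
  assumes "j \<notin> set U"
  shows "j_profile j (U @ j # S) = (U, filter (\<lambda>x. x < j) S, filter (\<lambda>x. j < x) S)"
proof -
  have "\<forall>x\<in>set U. x \<noteq> j" using assms by blast
  then show ?thesis unfolding j_profile_def by (simp add: takeWhile_append2 dropWhile_append2)
qed

lemma j_profile_cong_step:
  assumes "cong_step j \<sigma> \<tau>"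
  shows "j_profile j \<sigma> = j_profile j \<tau>"
proof -
  obtain U V W a c where ac: "a < j" "j < c"
    and \<sigma>: "\<sigma> = (U @ [j]) @ V @ [a, c] @ W" and \<tau>: "\<tau> = (U @ [j]) @ V @ [c, a] @ W"
    using assms unfolding cong_step_def by auto
  obtain U1 U2 where U: "U @ [j] = U1 @ j # U2" and "j \<notin> set U1"
    using split_list_first[of j "U @ [j]"] by auto
  then show ?thesis unfolding \<sigma> \<tau> U using ac by (simp add: j_profile_split)
qed

lemma cong_step_set_distinct:
  "cong_step j \<sigma> \<tau> \<Longrightarrow> set \<sigma> = set \<tau> \<and> (distinct \<sigma> \<longleftrightarrow> distinct \<tau>)"
  unfolding cong_step_def by (elim exE conjE) auto

lemma congj_invariants:
  "congj j \<sigma> \<tau> \<Longrightarrow>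
     j_profile j \<sigma> = j_profile j \<tau> \<and> set \<sigma> = set \<tau> \<and> (distinct \<sigma> \<longleftrightarrow> distinct \<tau>)"
  unfolding congj_def
proof (induction rule: rtranclp_induct)
  case (step \<tau> \<tau>')
  then show ?case using j_profile_cong_step cong_step_set_distinct by metis
qed simp

lemma not_avoids_j_ca_imp_not_minimal:
  assumes "distinct \<sigma>" "\<not> avoids_j_ca j \<sigma>"
  shows "\<not> weak_minimal_in_class j \<sigma>"
proof -
  obtain U V W c a where \<sigma>: "\<sigma> = U @ [j] @ V @ [c, a] @ W" and "a < j" "j < c"
    using assms(2) unfolding avoids_j_ca_def by auto
  define \<tau> where "\<tau> = U @ [j] @ V @ [a, c] @ W"
  have "cong_step j \<tau> \<sigma>"
    unfolding cong_step_def \<tau>_def \<sigma> using \<open>a < j\<close> \<open>j < c\<close> by blast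
  then have "congj j \<sigma> \<tau>" unfolding congj_def by auto
  moreover have "weak_le \<tau> \<sigma>"
    using inversions_swap_ascent(1)[of "U @ [j] @ V" a c W] assms(1) \<open>a < j\<close> \<open>j < c\<close>
    unfolding weak_le_def \<tau>_def \<sigma> by auto
  moreover have "\<tau> \<noteq> \<sigma>" unfolding \<tau>_def \<sigma> using \<open>a < j\<close> \<open>j < c\<close> by simp
  ultimately show ?thesis unfolding weak_minimal_in_class_def by blast
qed

lemma obtain_avoids_j_ca_split:
  assumes "distinct \<sigma>" "j \<in> set \<sigma>" "avoids_j_ca j \<sigma>"
  obtains U L G where "\<sigma> = U @ j # L @ G" "j \<notin> set U"
    and "\<forall>x\<in>set L. x < j" "\<forall>x\<in>set G. j < x"
proof -
  obtain U S where \<sigma>: "\<sigma> = U @ j # S" and "j \<notin> set U"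
    using split_list_first[OF assms(2)] by blast
  have "j \<notin> set S" using assms(1) \<sigma> by simp
  have "\<forall>V W c a. S = V @ [c, a] @ W \<longrightarrow> \<not> (a < j \<and> j < c)"
  proof (intro allI impI)
    fix V W c a
    assume "S = V @ [c, a] @ W"
    then have "\<sigma> = U @ [j] @ V @ [c, a] @ W" using \<sigma> by simp
    then show "\<not> (a < j \<and> j < c)" using assms(3) unfolding avoids_j_ca_def by blast
  qed
  then have "S = filter (\<lambda>x. x < j) S @ filter (\<lambda>x. j < x) S"
    using small_letters_first \<open>j \<notin> set S\<close> by simp
  then have "\<sigma> = U @ j # filter (\<lambda>x. x < j) S @ filter (\<lambda>x. j < x) S" using \<sigma> by metis
  then show thesis using that \<open>j \<notin> set U\<close> by simp
qed

lemma suffix_eq_if_inversions_subset: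
  assumes "distinct (U @ j # S)" "inversions (U @ j # S) \<subseteq> inversions (U @ j # L @ G)"
    and L: "\<forall>x\<in>set L. x < j" and G: "\<forall>x\<in>set G. j < x"
    and "filter (\<lambda>x. x < j) S = L" "filter (\<lambda>x. j < x) S = G"
  shows "S = L @ G"
proof -
  have "\<forall>V W c a. S = V @ [c, a] @ W \<longrightarrow> \<not> (a < j \<and> j < c)"
  proof (intro allI impI notI)
    fix V W c a
    assume S: "S = V @ [c, a] @ W" and ac: "a < j \<and> j < c"
    then have "(a, c) \<in> inversions (U @ j # S)"
      by (simp add: inversions_eq occurs_before_append occurs_before_Cons)
    then have "occurs_before (U @ j # L @ G) c a" using assms(2) by (auto simp: inversions_eq)
    moreover have "c \<notin> set U" using assms(1) unfolding S by simp
    ultimately show False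
      using ac L G by (auto simp: occurs_before_append occurs_before_Cons dest!: occurs_before_in_set)
  qed
  moreover have "j \<notin> set S" using assms(1) by simp
  ultimately show ?thesis using small_letters_first assms(5,6) by metis
qed

lemma avoids_j_ca_imp_minimal:
  assumes "distinct \<sigma>" "j \<in> set \<sigma>" "avoids_j_ca j \<sigma>"
  shows "weak_minimal_in_class j \<sigma>"
  unfolding weak_minimal_in_class_def
proof
  assume "\<exists>\<tau>. congj j \<sigma> \<tau> \<and> weak_le \<tau> \<sigma> \<and> \<tau> \<noteq> \<sigma>"
  then obtain \<tau> where cong: "congj j \<sigma> \<tau>" and below: "inversions \<tau> \<subseteq> inversions \<sigma>"
    and "\<tau> \<noteq> \<sigma>"
    unfolding weak_le_def by blast
  obtain U L G where \<sigma>: "\<sigma> = U @ j # L @ G" and "j \<notin> set U"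
    and L: "\<forall>x\<in>set L. x < j" and G: "\<forall>x\<in>set G. j < x"
    using obtain_avoids_j_ca_split assms by blast
  have "distinct \<tau>" "j \<in> set \<tau>" and profile: "j_profile j \<sigma> = j_profile j \<tau>"
    using congj_invariants[OF cong] assms(1,2) by auto
  then obtain U' S where \<tau>: "\<tau> = U' @ j # S" and "j \<notin> set U'"
    using split_list_first[of j \<tau>] by blast
  have "filter (\<lambda>x. x < j) G = []" "filter (\<lambda>x. j < x) L = []"
    using L G by (auto simp: filter_empty_conv)
  then have "U' = U" "filter (\<lambda>x. x < j) S = L" "filter (\<lambda>x. j < x) S = G"
    using profile L G unfolding \<sigma> \<tau>
    by (simp_all add: j_profile_split \<open>j \<notin> set U\<close> \<open>j \<notin> set U'\<close> filter_id_conv)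
  then have "S = L @ G"
    using suffix_eq_if_inversions_subset[of U j S L G] \<open>distinct \<tau>\<close> below L G unfolding \<sigma> \<tau> by blast
  then show False using \<open>\<tau> \<noteq> \<sigma>\<close> \<open>U' = U\<close> unfolding \<sigma> \<tau> by simp
qed

lemma weak_minimal_iff_avoids_j_ca:
  "distinct \<sigma> \<Longrightarrow> j \<in> set \<sigma> \<Longrightarrow> weak_minimal_in_class j \<sigma> \<longleftrightarrow> avoids_j_ca j \<sigma>"
  using avoids_j_ca_imp_minimal not_avoids_j_ca_imp_not_minimal by blast

section \<open>Runs of the automaton\<close>

text \<open>Positions are counted from \<open>0\<close> here, so in state \<open>H k\<close> the letter \<open>j\<close> sits at position
  \<open>k\<close>, which makes the initial state \<open>H (j - 1)\<close> match the identity.\<close>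

definition u_invariant :: "nat \<Rightarrow> nat \<Rightarrow> nat list \<Rightarrow> ustate \<Rightarrow> bool" where
  "u_invariant n j \<pi> q \<longleftrightarrow> distinct \<pi> \<and> length \<pi> = n \<and> (case q of
      H k \<Rightarrow> k < n \<and> \<pi> ! k = j \<and> (\<forall>p. k < p \<and> p < n \<longrightarrow> j < \<pi> ! p)
    | I k \<Rightarrow> k < n \<and> (\<exists>p\<^sub>j<k. \<pi> ! p\<^sub>j = j \<and> (\<forall>p. p\<^sub>j < p \<and> p \<le> k \<longrightarrow> \<pi> ! p < j))
              \<and> (\<forall>p. k < p \<and> p < n \<longrightarrow> j < \<pi> ! p)
    | D k \<Rightarrow> True)"

lemma u_invariant_step_H:
  assumes inv: "u_invariant n j \<pi> (H k)" and i: "1 \<le> i" "i < n" "\<pi> ! (i - 1) < \<pi> ! i"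
  shows "u_invariant n j (swap_pos i \<pi>) (u_delta n (H k) i)"
proof -
  have \<pi>: "distinct \<pi>" "length \<pi> = n" and k: "k < n" "\<pi> ! k = j"
    and right: "\<forall>p. k < p \<and> p < n \<longrightarrow> j < \<pi> ! p"
    using inv unfolding u_invariant_def by auto
  have distinct: "distinct (swap_pos i \<pi>)" using \<pi> i by (simp add: distinct_swap_pos)
  have nth: "swap_pos i \<pi> ! p =
      (if p = i - 1 then \<pi> ! i else if p = i then \<pi> ! (i - 1) else \<pi> ! p)" for p
    using nth_swap_pos i \<pi> by simp
  consider "i = k" | "i = k + 1" | "i \<noteq> k" "i \<noteq> k + 1" by blast
  then show ?thesis
  proof cases
    case 1
    have "u_delta n (H k) i = I k" using 1 k by auto
    moreover have "swap_pos i \<pi> ! (k - 1) = j" "\<forall>p. k - 1 < p \<and> p \<le> k \<longrightarrow> swap_pos i \<pi> ! p < j"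
      using i k unfolding 1 by (auto simp: nth[unfolded 1])
    moreover have "\<forall>p. k < p \<and> p < n \<longrightarrow> j < swap_pos i \<pi> ! p"
      using right unfolding 1 by (auto simp: nth[unfolded 1])
    ultimately show ?thesis
      using distinct \<pi> k 1 i unfolding u_invariant_def by (auto intro!: exI[of _ "k - 1"])
  next
    case 2
    have "u_delta n (H k) i = H (k + 1)" using 2 i by auto
    moreover have "swap_pos i \<pi> ! (k + 1) = j" "\<forall>p. k + 1 < p \<and> p < n \<longrightarrow> j < swap_pos i \<pi> ! p"
      using k right unfolding 2 by (auto simp: nth[unfolded 2, simplified])
    ultimately show ?thesis using distinct \<pi> 2 i unfolding u_invariant_def by simp
  next
    case 3
    have "u_delta n (H k) i = H k" using 3 by auto
    moreover have "swap_pos i \<pi> ! k = j" using 3 i k by (auto simp: nth)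
    moreover have "j < swap_pos i \<pi> ! p" if "k < p" "p < n" for p
      using right[rule_format, of p] right[rule_format, of i] right[rule_format, of "i - 1"] that 3 i
      unfolding nth by (auto simp: less_diff_conv)
    ultimately show ?thesis using distinct \<pi> k unfolding u_invariant_def by auto
  qed
qed

lemma u_invariant_step_I:
  assumes inv: "u_invariant n j \<pi> (I k)" and i: "1 \<le> i" "i < n" "\<pi> ! (i - 1) < \<pi> ! i"
  shows "u_invariant n j (swap_pos i \<pi>) (u_delta n (I k) i)"
proof (cases "k + 2 \<le> n \<and> i = k + 1")
  case True
  then show ?thesis using inv unfolding u_invariant_def by (simp add: distinct_swap_pos)
next
  case False
  then have "i \<noteq> k + 1" and step: "u_delta n (I k) i = I k" using i by auto
  obtain p\<^sub>j where \<pi>: "distinct \<pi>" "length \<pi> = n" and k: "k < n" "p\<^sub>j < k" "\<pi> ! p\<^sub>j = j"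
    and middle: "\<forall>p. p\<^sub>j < p \<and> p \<le> k \<longrightarrow> \<pi> ! p < j"
    and right: "\<forall>p. k < p \<and> p < n \<longrightarrow> j < \<pi> ! p"
    using inv unfolding u_invariant_def by auto
  have distinct: "distinct (swap_pos i \<pi>)" using \<pi> i by (simp add: distinct_swap_pos)
  have nth: "swap_pos i \<pi> ! p =
      (if p = i - 1 then \<pi> ! i else if p = i then \<pi> ! (i - 1) else \<pi> ! p)" for p
    using nth_swap_pos i \<pi> by simp
  have right': "j < swap_pos i \<pi> ! p" if "k < p" "p < n" for p
    using right[rule_format, of p] right[rule_format, of i] right[rule_format, of "i - 1"] that
      \<open>i \<noteq> k + 1\<close> i unfolding nth by (auto simp: less_diff_conv)
  have "i \<noteq> p\<^sub>j + 1" using middle[rule_format, of "p\<^sub>j + 1"] k i by auto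
  then have "\<exists>p\<^sub>j'<k. swap_pos i \<pi> ! p\<^sub>j' = j \<and> (\<forall>p. p\<^sub>j' < p \<and> p \<le> k \<longrightarrow> swap_pos i \<pi> ! p < j)"
  proof (cases "i = p\<^sub>j")
    case True
    then show ?thesis
      using middle k i unfolding nth by (intro exI[of _ "p\<^sub>j - 1"]) auto
  next
    case False
    then show ?thesis
      using middle middle[rule_format, of i] middle[rule_format, of "i - 1"] k i \<open>i \<noteq> k + 1\<close>
        \<open>i \<noteq> p\<^sub>j + 1\<close>
      unfolding nth by (intro exI[of _ p\<^sub>j]) (auto simp: less_diff_conv)
  qed
  then show ?thesis using distinct \<pi> k right' unfolding step u_invariant_def by auto
qed

lemma u_invariant_step:
  assumes "u_invariant n j \<pi> q" "1 \<le> i" "i < n" "\<pi> ! (i - 1) < \<pi> ! i"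
  shows "u_invariant n j (swap_pos i \<pi>) (u_delta n q i)"
proof (cases q)
  case (D k)
  then show ?thesis using assms unfolding u_invariant_def by (simp add: distinct_swap_pos)
qed (use assms u_invariant_step_H u_invariant_step_I in simp_all)

lemma u_invariant_run:
  "ascent_chain \<pi> w \<Longrightarrow> u_invariant n j \<pi> q \<Longrightarrow>
     u_invariant n j (fold swap_pos w \<pi>) (fold (\<lambda>i q. u_delta n q i) w q)"
proof (induction w arbitrary: \<pi> q)
  case (Cons i w)
  then have "u_invariant n j (swap_pos i \<pi>) (u_delta n q i)"
    using u_invariant_step unfolding u_invariant_def by auto
  then show ?case using Cons by simp
qed simp

lemma u_invariant_init:
  assumes "1 \<le> j" "j < n"
  shows "u_invariant n j [1..<n+1] (H (j - 1))"
proof -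
  have "[1..<n+1] ! p = p + 1" if "p < n" for p using that by (simp del: upt_Suc)
  then show ?thesis using assms unfolding u_invariant_def by (auto simp del: upt_Suc)
qed

lemma u_invariant_accepting_imp_avoids_j_ca:
  assumes "u_invariant n j \<sigma> q" "u_accepting q"
  shows "avoids_j_ca j \<sigma>"
  unfolding avoids_j_ca_def
proof (intro allI impI notI)
  fix U V W c a
  assume \<sigma>: "\<sigma> = U @ [j] @ V @ [c, a] @ W" and ac: "a < j \<and> j < c"
  have "distinct \<sigma>" "length \<sigma> = n" using assms unfolding u_invariant_def by auto
  define p\<^sub>c where "p\<^sub>c = length U + 1 + length V"
  have j_at: "\<sigma> ! p = j \<longleftrightarrow> p = length U" if "p < n" for p
    using nth_eq_iff_index_eq[OF \<open>distinct \<sigma>\<close>, of p "length U"] that \<open>length \<sigma> = n\<close>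
    unfolding \<sigma> by (auto simp: nth_append)
  have "\<sigma> ! p\<^sub>c = c" "\<sigma> ! (p\<^sub>c + 1) = a" "p\<^sub>c + 1 < n" "length U < p\<^sub>c"
    using \<open>length \<sigma> = n\<close> unfolding \<sigma> p\<^sub>c_def by (auto simp: nth_append)
  show False
  proof (cases q)
    case (H k)
    then have "k < n" "\<sigma> ! k = j" and right: "\<forall>p. k < p \<and> p < n \<longrightarrow> j < \<sigma> ! p"
      using assms(1) unfolding u_invariant_def by auto
    then have "k = length U" using j_at by blast
    then show False
      using right[rule_format, of "p\<^sub>c + 1"] ac \<open>\<sigma> ! (p\<^sub>c + 1) = a\<close> \<open>p\<^sub>c + 1 < n\<close>
        \<open>length U < p\<^sub>c\<close> by simp
  next
    case (I k)
    then obtain p\<^sub>j where "p\<^sub>j < k" "k < n" "\<sigma> ! p\<^sub>j = j"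
      and middle: "\<forall>p. p\<^sub>j < p \<and> p \<le> k \<longrightarrow> \<sigma> ! p < j"
      and right: "\<forall>p. k < p \<and> p < n \<longrightarrow> j < \<sigma> ! p"
      using assms(1) unfolding u_invariant_def by auto
    then have "p\<^sub>j = length U" using j_at by simp
    show False
    proof (cases "p\<^sub>c + 1 \<le> k")
      case True
      then show False using middle[rule_format, of p\<^sub>c] ac \<open>\<sigma> ! p\<^sub>c = c\<close> \<open>length U < p\<^sub>c\<close>
          \<open>p\<^sub>j = length U\<close> by simp
    next
      case False
      then show False using right[rule_format, of "p\<^sub>c + 1"] ac \<open>\<sigma> ! (p\<^sub>c + 1) = a\<close>
          \<open>p\<^sub>c + 1 < n\<close> by simp
    qed
  qed (use assms(2) in simp)
qed

text \<open>Leaving the \<open>h\<close>-states means applying \<open>s\<^sub>k\<close> in \<open>h\<^sub>k\<close>, which puts a smaller letter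
  behind \<open>j\<close>; an ascent chain never removes that inversion again.\<close>

lemma fold_u_delta_stays_H:
  assumes "ascent_chain \<pi> w" "u_invariant n j \<pi> (H k)"
    and "\<forall>x. (x, j) \<notin> inversions (fold swap_pos w \<pi>)"
  shows "\<exists>k'. fold (\<lambda>i q. u_delta n q i) w (H k) = H k'"
  using assms
proof (induction w arbitrary: \<pi> k)
  case (Cons i w)
  have \<pi>: "distinct \<pi>" "length \<pi> = n" and "\<pi> ! k = j"
    using Cons.prems(2) unfolding u_invariant_def by auto
  have i: "1 \<le> i" "i < length \<pi>" "\<pi> ! (i - 1) < \<pi> ! i" and w: "ascent_chain (swap_pos i \<pi>) w"
    using Cons.prems(1) by auto
  have "i \<noteq> k"
  proof
    assume "i = k"
    then have "(\<pi> ! (i - 1), j) \<in> inversions (swap_pos i \<pi>)"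
      using inversions_swap_pos_ascent(1)[OF i(1,2) \<pi>(1) i(3)] \<open>\<pi> ! k = j\<close> by simp
    moreover have "inversions (swap_pos i \<pi>) \<subseteq> inversions (fold swap_pos w (swap_pos i \<pi>))"
      using ascent_chain_inversions(2)[OF w] i \<pi> by (simp add: distinct_swap_pos)
    ultimately show False using Cons.prems(3) by auto
  qed
  then have "\<exists>k''. u_delta n (H k) i = H k''" by auto
  then obtain k'' where k'': "u_delta n (H k) i = H k''" by blast
  then have "u_invariant n j (swap_pos i \<pi>) (H k'')"
    using u_invariant_step[OF Cons.prems(2)] i \<pi> by fastforce
  then show ?case using Cons.IH[OF w] Cons.prems(3) k'' by simp
qed simp

lemma fold_u_delta_I: "\<forall>i\<in>set w. i \<noteq> k + 1 \<Longrightarrow> fold (\<lambda>i q. u_delta n q i) w (I k) = I k"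
  by (induction w) auto

lemma exists_ascent_chain_ending_in_H:
  assumes "\<tau> \<in> perms n" "1 \<le> j" "j < n" "\<forall>x. (x, j) \<notin> inversions \<tau>"
  shows "\<exists>w k. ascent_chain [1..<n+1] w \<and> fold swap_pos w [1..<n+1] = \<tau>
    \<and> fold (\<lambda>i q. u_delta n q i) w (H (j - 1)) = H k"
proof -
  have "distinct [1..<n+1]" "inversions [1..<n+1] \<subseteq> inversions \<tau>"
    by (simp_all add: inversions_upt del: upt_Suc)
  moreover have "distinct \<tau>" "set [1..<n+1] = set \<tau>"
    using assms(1) unfolding perms_def by (simp_all add: atLeastLessThanSuc_atLeastAtMost del: upt_Suc)
  ultimately
  obtain w where w: "ascent_chain [1..<n+1] w" "fold swap_pos w [1..<n+1] = \<tau>"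
    using ascent_chain_to_weak_greater by blast
  then show ?thesis
    using fold_u_delta_stays_H[OF w(1) u_invariant_init[OF assms(2,3)]] assms(4) by auto
qed

lemma inversions_move_left_past_smaller:
  assumes "\<forall>x\<in>set L. x < j"
  shows "inversions (U @ L @ j # R) \<subseteq> inversions (U @ j # L @ R)"
proof (clarsimp simp: inversions_eq)
  fix a b
  assume "a < b" and before: "occurs_before (U @ L @ j # R) b a"
  then have "\<not> (b \<in> set L \<and> a = j)" using assms by auto
  then have "occurs_before (L @ j # R) b a \<Longrightarrow> occurs_before (j # L @ R) b a"
    by (auto simp: occurs_before_append occurs_before_Cons)
  then show "occurs_before (U @ j # L @ R) b a"
    using before unfolding occurs_before_append[of U] by auto
qed

lemma length_perms: "\<sigma> \<in> perms n \<Longrightarrow> length \<sigma> = n"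
  unfolding perms_def using distinct_card by fastforce

lemma not_inversion_below_j:
  "j \<notin> set V \<Longrightarrow> \<forall>x\<in>set G. j < x \<Longrightarrow> (y, j) \<notin> inversions (V @ j # G)"
  by (auto simp: inversions_eq occurs_before_append occurs_before_Cons dest: occurs_before_in_set)

lemma exists_ascent_chain_ending_in_I:
  assumes "A @ [x, j] @ G \<in> perms n" "1 \<le> j" "j < n"
    and "x < j" "j \<notin> set A" "\<forall>y\<in>set G. j < y"
  shows "\<exists>w. ascent_chain [1..<n+1] w \<and> fold swap_pos w [1..<n+1] = A @ [j, x] @ G
    \<and> fold (\<lambda>i q. u_delta n q i) w (H (j - 1)) = I (length A + 1)"
proof -
  define \<rho> where "\<rho> = A @ [x, j] @ G"
  define B where "B = length A + 1"
  have "distinct \<rho>" using assms(1) unfolding \<rho>_def perms_def by simp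
  have "length \<rho> = n" using length_perms[OF assms(1)] unfolding \<rho>_def .
  have "j \<notin> set (A @ [x])" using assms(4,5) by simp
  then have "\<forall>y. (y, j) \<notin> inversions ((A @ [x]) @ j # G)" using not_inversion_below_j assms(6) by blast
  then have "\<forall>y. (y, j) \<notin> inversions \<rho>" unfolding \<rho>_def by simp
  then obtain w k where w: "ascent_chain [1..<n+1] w" "fold swap_pos w [1..<n+1] = \<rho>"
    and run: "fold (\<lambda>i q. u_delta n q i) w (H (j - 1)) = H k"
    using exists_ascent_chain_ending_in_H[OF assms(1)[folded \<rho>_def] assms(2,3)] by blast
  have "u_invariant n j \<rho> (H k)"
    using u_invariant_run[OF w(1) u_invariant_init[OF assms(2,3)]] w(2) run by simp
  then have "\<rho> ! k = j" "k < n" unfolding u_invariant_def by auto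
  moreover have "\<rho> ! B = j" "\<rho> ! (B - 1) = x" "B < n"
    using \<open>length \<rho> = n\<close> unfolding \<rho>_def B_def by (auto simp: nth_append)
  ultimately have "k = B" using nth_eq_iff_index_eq[OF \<open>distinct \<rho>\<close>] \<open>length \<rho> = n\<close> by metis
  have "swap_pos B \<rho> = A @ [j, x] @ G" unfolding \<rho>_def by (rule swap_pos_append) (simp_all add: B_def)
  then have "fold swap_pos (w @ [B]) [1..<n+1] = A @ [j, x] @ G" using w(2) by simp
  moreover have "ascent_chain [1..<n+1] (w @ [B])"
    using w \<open>\<rho> ! B = j\<close> \<open>\<rho> ! (B - 1) = x\<close> \<open>x < j\<close> \<open>B < n\<close> \<open>length \<rho> = n\<close>
    by (simp add: ascent_chain_append B_def del: upt_Suc)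
  moreover have "fold (\<lambda>i q. u_delta n q i) (w @ [B]) (H (j - 1)) = I B"
    using run \<open>k = B\<close> \<open>B < n\<close> by auto
  ultimately show ?thesis unfolding B_def by blast
qed

lemma exists_accepted_ascent_chain:
  assumes "\<sigma> \<in> perms n" "1 \<le> j" "j < n" "avoids_j_ca j \<sigma>"
  shows "\<exists>w. ascent_chain [1..<n+1] w \<and> fold swap_pos w [1..<n+1] = \<sigma>
    \<and> u_accepting (fold (\<lambda>i q. u_delta n q i) w (H (j - 1)))"
proof -
  have "distinct \<sigma>" "j \<in> set \<sigma>" using assms(1-3) unfolding perms_def by auto
  then obtain U L G where \<sigma>: "\<sigma> = U @ j # L @ G" and "j \<notin> set U"
    and L: "\<forall>x\<in>set L. x < j" and G: "\<forall>x\<in>set G. j < x"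
    using obtain_avoids_j_ca_split assms(4) by blast
  show ?thesis
  proof (cases L rule: rev_exhaust)
    case Nil
    then show ?thesis
      using exists_ascent_chain_ending_in_H[OF assms(1-3)] not_inversion_below_j[OF \<open>j \<notin> set U\<close> G]
      unfolding \<sigma> by fastforce
  next
    case (snoc L' x)
    define B where "B = length (U @ L') + 1"
    define \<rho> where "\<rho> = (U @ L') @ [j, x] @ G"
    have "(U @ L') @ [x, j] @ G \<in> perms n"
      using assms(1) unfolding perms_def \<sigma> snoc by (simp add: insert_commute)
    moreover have "x < j" "j \<notin> set (U @ L')" using L \<open>j \<notin> set U\<close> unfolding snoc by auto
    ultimately obtain w\<^sub>1 where w\<^sub>1: "ascent_chain [1..<n+1] w\<^sub>1" "fold swap_pos w\<^sub>1 [1..<n+1] = \<rho>"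
      and run\<^sub>1: "fold (\<lambda>i q. u_delta n q i) w\<^sub>1 (H (j - 1)) = I B"
      using exists_ascent_chain_ending_in_I[OF _ assms(2,3) _ _ G] unfolding \<rho>_def B_def by blast
    have "distinct \<rho>" "set \<rho> = set \<sigma>" using \<open>distinct \<sigma>\<close> unfolding \<rho>_def \<sigma> snoc by auto
    moreover have "inversions \<rho> \<subseteq> inversions \<sigma>"
      using inversions_move_left_past_smaller[of L' j U "x # G"] L unfolding \<rho>_def \<sigma> snoc by simp
    ultimately obtain w\<^sub>2 where w\<^sub>2: "ascent_chain \<rho> w\<^sub>2" "fold swap_pos w\<^sub>2 \<rho> = \<sigma>"
      and avoid: "\<forall>c. set (take c \<rho>) = set (take c \<sigma>) \<longrightarrow> c \<notin> set w\<^sub>2"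
      using ascent_chain_to_weak_greater \<open>distinct \<sigma>\<close> by blast
    have "take (B + 1) \<rho> = U @ L' @ [j, x]" "take (B + 1) \<sigma> = U @ j # L"
      unfolding \<rho>_def \<sigma> snoc B_def by simp_all
    then have "set (take (B + 1) \<rho>) = set (take (B + 1) \<sigma>)" using snoc by auto
    \<comment> \<open>so \<open>w\<^sub>2\<close> never uses \<open>s\<^sub>B\<^sub>+\<^sub>1\<close> and the run stays in \<open>I B\<close>\<close>
    then have "\<forall>i\<in>set w\<^sub>2. i \<noteq> B + 1" using avoid by blast
    then have "fold (\<lambda>i q. u_delta n q i) (w\<^sub>1 @ w\<^sub>2) (H (j - 1)) = I B"
      using run\<^sub>1 fold_u_delta_I by simp
    moreover have "ascent_chain [1..<n+1] (w\<^sub>1 @ w\<^sub>2)" using w\<^sub>1 w\<^sub>2(1) by (simp add: ascent_chain_append)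
    moreover have "fold swap_pos (w\<^sub>1 @ w\<^sub>2) [1..<n+1] = \<sigma>" using w\<^sub>1(2) w\<^sub>2(2) by simp
    ultimately show ?thesis by (metis u_accepting.simps(2))
  qed
qed

theorem theorem1p1:
  fixes n j :: nat and \<sigma> :: "nat list"
  assumes "n \<ge> 3" and "2 \<le> j" and "j \<le> n - 1" and "\<sigma> \<in> perms n"
  shows "weak_minimal_in_class j \<sigma> \<longleftrightarrow>
         (\<exists>w. is_word n w \<and> reduced_word n w \<and> word_perm n w = \<sigma> \<and> U_accepts n j w)"
proof -
  have j: "1 \<le> j" "j < n" using assms(1-3) by auto
  have "distinct \<sigma>" "j \<in> set \<sigma>" using assms(4) j unfolding perms_def by auto
  then have "weak_minimal_in_class j \<sigma> \<longleftrightarrow> avoids_j_ca j \<sigma>"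
    by (rule weak_minimal_iff_avoids_j_ca)
  also have "\<dots> \<longleftrightarrow> (\<exists>w. ascent_chain [1..<n+1] w \<and> fold swap_pos w [1..<n+1] = \<sigma>
      \<and> u_accepting (fold (\<lambda>i q. u_delta n q i) w (H (j - 1))))"
    using exists_accepted_ascent_chain[OF assms(4) j]
      u_invariant_accepting_imp_avoids_j_ca[OF u_invariant_run[OF _ u_invariant_init[OF j]]]
    by metis
  also have "\<dots> \<longleftrightarrow> (\<exists>w. is_word n w \<and> reduced_word n w \<and> word_perm n w = \<sigma> \<and> U_accepts n j w)"
    unfolding reduced_word_iff_ascent_chain[symmetric] word_perm_def U_accepts_def by blast
  finally show ?thesis .
qed

end
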